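(* In the I/O model, given an OBDD for a boolean function $f$ with $N$ internal nodes stored as a sorted file of node triples, and an assignment $\vec x$ given as a list of pairs $(i,v)$ sorted by variable index, the value $f(\vec x)$ can be computed using $N/B+|\vec x|/B$ I/Os and $O(N+|\vec x|)$ time.
   Context: I/O model: internal memory holds $M$ elements, data is moved between internal memory and external storage in blocks of $B$ consecutive elements, and the cost is the number of block transfers (I/Os). An OBDD over variables $x_0,x_1,\dots$ is a rooted DAG with leaves $\bot,\top$ and internal nodes labelled by a variable index $i$ with low child (for $x_i=\bot$) and high child (for $x_i=\top$), labels strictly increasing along every path. Each internal node has identifier $(i,\mathit{id})$, unique within its level $i$, and nodes are ordered lexicographically by $(i,\mathit{id})$; the OBDD is stored as a file of triples $(\mathit{uid},\mathit{low},\mathit{high})$ (children given as identifiers or leaf values) in that order. *)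

theory Defs
  imports Main "HOL-Library.Product_Lexorder"
begin

text \<open>A node identifier (i, id): level i = variable index, id unique within the level.
  Identifiers are ordered lexicographically (Product_Lexorder).\<close>
type_synonym uid = "nat \<times> nat"

datatype child = Leaf bool | Ref uid

type_synonym node = "uid \<times> child \<times> child"

type_synonym asg = "nat \<times> bool"

definition child_ok :: "node list \<Rightarrow> uid \<Rightarrow> child \<Rightarrow> bool" where
  "child_ok ns u c = (case c of Leaf _ \<Rightarrow> True
                      | Ref v \<Rightarrow> fst u < fst v \<and> v \<in> fst ` set ns)"

definition wf_obdd :: "child \<Rightarrow> node list \<Rightarrow> bool" where
  "wf_obdd root ns =
     (sorted_wrt (<) (map fst ns)
      \<and> (\<forall>(u, l, h) \<in> set ns. child_ok ns u l \<and> child_ok ns u h)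
      \<and> (case root of Leaf _ \<Rightarrow> True | Ref v \<Rightarrow> v \<in> fst ` set ns))"

inductive obdd_val :: "node list \<Rightarrow> (nat \<Rightarrow> bool) \<Rightarrow> child \<Rightarrow> bool \<Rightarrow> bool"
  for ns a where
  leaf: "obdd_val ns a (Leaf b) b"
| node_hi: "(u, l, h) \<in> set ns \<Longrightarrow> a (fst u) \<Longrightarrow> obdd_val ns a h b \<Longrightarrow> obdd_val ns a (Ref u) b"
| node_lo: "(u, l, h) \<in> set ns \<Longrightarrow> \<not> a (fst u) \<Longrightarrow> obdd_val ns a l b \<Longrightarrow> obdd_val ns a (Ref u) b"

definition wf_asg :: "asg list \<Rightarrow> node list \<Rightarrow> bool" where
  "wf_asg xs ns = (sorted_wrt (<) (map fst xs) \<and> (\<forall>u \<in> fst ` set ns. fst u \<in> fst ` set xs))"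

definition asg_fun :: "asg list \<Rightarrow> nat \<Rightarrow> bool" where
  "asg_fun xs i = (case map_of xs i of Some v \<Rightarrow> v | None \<Rightarrow> False)"

text \<open>Internal state: a bounded number of memory cells, each holding one element
  (a node triple, an assignment pair, a child reference) or one bit.\<close>
datatype cell = CNode node | CAsg asg | CChild child | CBit bool

datatype action = Adv1 | Adv2 | Halt bool

text \<open>One step sees the internal cells and the current head element of each input file
  (None past the end), and decides to advance one of the files or to halt with an output.\<close>
type_synonym machine = "cell list \<Rightarrow> node option \<Rightarrow> asg option \<Rightarrow> action \<times> cell list"

text \<open>Cells that may be present after a step: old cells, the current heads, children
  of node cells, and bits (no encoding of unbounded information into one cell).\<close>
definition allowed_cells :: "cell list \<Rightarrow> node option \<Rightarrow> asg option \<Rightarrow> cell set" where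
  "allowed_cells st h1 h2 =
     (let cs = set st \<union> CNode ` set_option h1 \<union> CAsg ` set_option h2
      in cs \<union> {CChild l | u l h. CNode (u, l, h) \<in> cs}
            \<union> {CChild h | u l h. CNode (u, l, h) \<in> cs} \<union> range CBit)"

definition step_ok :: "nat \<Rightarrow> machine \<Rightarrow> bool" where
  "step_ok K m = (\<forall>st h1 h2. length (snd (m st h1 h2)) \<le> K
                              \<and> set (snd (m st h1 h2)) \<subseteq> allowed_cells st h1 h2)"

text \<open>Run with fuel; returns (output, final position in file 1, final position in file 2,
  number of steps).\<close>
fun run :: "machine \<Rightarrow> node list \<Rightarrow> asg list \<Rightarrow> nat \<Rightarrow> cell list \<Rightarrow> nat \<Rightarrow> nat
            \<Rightarrow> (bool \<times> nat \<times> nat \<times> nat) option" where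
  "run m ns xs 0 st p1 p2 = None"
| "run m ns xs (Suc k) st p1 p2 =
     (let h1 = (if p1 < length ns then Some (ns ! p1) else None);
          h2 = (if p2 < length xs then Some (xs ! p2) else None);
          (a, st') = m st h1 h2
      in case a of
           Halt b \<Rightarrow> Some (b, p1, p2, 1)
         | Adv1 \<Rightarrow> map_option (\<lambda>(b, q1, q2, t). (b, q1, q2, Suc t)) (run m ns xs k st' (Suc p1) p2)
         | Adv2 \<Rightarrow> map_option (\<lambda>(b, q1, q2, t). (b, q1, q2, Suc t)) (run m ns xs k st' p1 (Suc p2)))"

text \<open>I/Os for a file of length len scanned sequentially (one buffer block of size B) when
  the head element at position p has been inspected last: blocks 0 .. p div B, capped at
  the file length.\<close>
definition scan_ios :: "nat \<Rightarrow> nat \<Rightarrow> nat \<Rightarrow> nat" where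
  "scan_ios B len p = (min (Suc p) len + B - 1) div B"

definition ceil_div :: "nat \<Rightarrow> nat \<Rightarrow> nat" where
  "ceil_div n B = (n + B - 1) div B"

end

theory Submission
  imports Defs
begin

text \<open>Keep a single cell: the reference to the node that is to be evaluated next. Along every
  path of the OBDD node identifiers increase lexicographically and the node file is sorted, so
  this node always lies ahead of the head of the node file, and its variable ahead of the head of
  the assignment file. Hence both files are scanned once, simultaneously, every step advancing
  one of them: linear time, and every block is read only once.\<close>

text \<open>The \<open>Halt False\<close> branches are unreachable on well-formed input.\<close>

definition obdd_scanner :: machine where
  "obdd_scanner st h1 h2 = (case st of
     [CChild (Leaf b)] \<Rightarrow> (Halt b, [])
   | [CChild (Ref v)] \<Rightarrow> (case (h1, h2) of
         (Some (u, l, h), Some (i, val)) \<Rightarrow>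
           if u < v then (Adv1, [CChild (Ref v)])
           else if u = v \<and> i < fst v then (Adv2, [CChild (Ref v)])
           else if u = v \<and> i = fst v then (Adv1, [CChild (if val then h else l)])
           else (Halt False, [])
       | _ \<Rightarrow> (Halt False, []))
   | _ \<Rightarrow> (Halt False, []))"

lemma step_ok_obdd_scanner: "step_ok 1 obdd_scanner"
  unfolding step_ok_def
proof (intro allI)
  fix st h1 h2
  let ?st' = "snd (obdd_scanner st h1 h2)"
  have cases: "?st' = [] \<or> (?st' = st \<and> length st = 1)
      \<or> (\<exists>u l h. h1 = Some (u, l, h) \<and> (?st' = [CChild l] \<or> ?st' = [CChild h]))"
    unfolding obdd_scanner_def
    by (simp split: list.split cell.split child.split option.split prod.split)
  have "set st \<subseteq> allowed_cells st h1 h2"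
    unfolding allowed_cells_def Let_def by blast
  moreover have "CChild l \<in> allowed_cells st h1 h2" "CChild h \<in> allowed_cells st h1 h2"
    if "h1 = Some (u, l, h)" for u l h
    using that unfolding allowed_cells_def Let_def by blast+
  ultimately show "length ?st' \<le> 1 \<and> set ?st' \<subseteq> allowed_cells st h1 h2"
    using cases by auto
qed

lemma run_Suc_Halt:
  assumes "\<And>h1 h2. m st h1 h2 = (Halt b, st')"
  shows "run m ns xs (Suc k) st p1 p2 = Some (b, p1, p2, 1)"
  using assms by (simp add: Let_def)

lemma run_Suc_Adv1:
  assumes "p1 < length ns" "p2 < length xs" "m st (Some (ns ! p1)) (Some (xs ! p2)) = (Adv1, st')"
    and "run m ns xs k st' (Suc p1) p2 = Some (b, q1, q2, t)"
  shows "run m ns xs (Suc k) st p1 p2 = Some (b, q1, q2, Suc t)"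
  using assms by (simp add: Let_def)

lemma run_Suc_Adv2:
  assumes "p1 < length ns" "p2 < length xs" "m st (Some (ns ! p1)) (Some (xs ! p2)) = (Adv2, st')"
    and "run m ns xs k st' p1 (Suc p2) = Some (b, q1, q2, t)"
  shows "run m ns xs (Suc k) st p1 p2 = Some (b, q1, q2, Suc t)"
  using assms by (simp add: Let_def)

lemma run_obdd_scanner_Leaf:
  "run obdd_scanner ns xs (Suc k) [CChild (Leaf b)] p1 p2 = Some (b, p1, p2, 1)"
  by (rule run_Suc_Halt) (simp add: obdd_scanner_def)

definition key_from :: "('k \<times> 'v) list \<Rightarrow> nat \<Rightarrow> 'k \<Rightarrow> bool" where
  "key_from xs p k \<longleftrightarrow> (\<exists>j. p \<le> j \<and> j < length xs \<and> fst (xs ! j) = k)"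

lemma key_from_0: "key_from xs 0 k \<longleftrightarrow> k \<in> fst ` set xs"
  unfolding key_from_def set_map[symmetric] in_set_conv_nth by auto

lemma key_from_mono: "p \<le> q \<Longrightarrow> key_from xs q k \<Longrightarrow> key_from xs p k"
  unfolding key_from_def by (blast intro: order_trans)

lemma key_from_Suc: "key_from xs p k \<Longrightarrow> fst (xs ! p) \<noteq> k \<Longrightarrow> key_from xs (Suc p) k"
  unfolding key_from_def by (metis Suc_leI le_neq_implies_less)

lemma key_from_head_le:
  fixes xs :: "('k::order \<times> 'v) list"
  assumes "sorted_wrt (<) (map fst xs)" "key_from xs p k"
  shows "p < length xs \<and> fst (xs ! p) \<le> k"
proof -
  obtain j where j: "p \<le> j" "j < length xs" "fst (xs ! j) = k"
    using assms(2) by (auto simp: key_from_def)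
  have "fst (xs ! p) \<le> fst (xs ! j)"
    using sorted_wrt_nth_less[OF assms(1), of p j] j by (cases "p = j") (auto intro: less_imp_le)
  with j show ?thesis by simp
qed

lemma key_from_Suc_if_greater:
  fixes xs :: "('k::order \<times> 'v) list"
  assumes "sorted_wrt (<) (map fst xs)" "p < length xs" "fst (xs ! p) < k" "k \<in> fst ` set xs"
  shows "key_from xs (Suc p) k"
proof -
  have "key_from xs 0 k"
    using assms(4) by (simp add: key_from_0)
  then obtain j where j: "j < length xs" "fst (xs ! j) = k"
    by (auto simp: key_from_def)
  have "\<not> j \<le> p"
  proof
    assume "j \<le> p"
    then have "fst (xs ! j) \<le> fst (xs ! p)"
      using sorted_wrt_nth_less[OF assms(1), of j p] assms(2) by (cases "j = p") (auto intro: less_imp_le)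
    with assms(3) j(2) show False by simp
  qed
  with j show ?thesis
    unfolding key_from_def by (intro exI[of _ j]) simp
qed

definition child_ahead :: "node list \<Rightarrow> asg list \<Rightarrow> nat \<Rightarrow> nat \<Rightarrow> child \<Rightarrow> bool" where
  "child_ahead ns xs p1 p2 c = (case c of
     Leaf _ \<Rightarrow> True
   | Ref v \<Rightarrow> key_from ns p1 v \<and> key_from xs p2 (fst v))"

lemma child_ahead_root:
  assumes "wf_obdd root ns" "wf_asg xs ns"
  shows "child_ahead ns xs 0 0 root"
proof (cases root)
  case (Ref v)
  then have "v \<in> fst ` set ns"
    using assms(1) by (simp add: wf_obdd_def)
  moreover from this have "fst v \<in> fst ` set xs"
    using assms(2) unfolding wf_asg_def by blast
  ultimately show ?thesis
    using Ref by (simp add: child_ahead_def key_from_0)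
qed (simp add: child_ahead_def)

lemma child_ahead_child:
  assumes wf: "wf_obdd root ns" "wf_asg xs ns"
    and node: "p1 < length ns" "ns ! p1 = (v, l, h)"
    and asg: "p2 < length xs" "fst (xs ! p2) = fst v"
    and c: "c \<in> {l, h}"
  shows "child_ahead ns xs (Suc p1) p2 c"
proof (cases c)
  case (Ref w)
  have "(v, l, h) \<in> set ns"
    using node nth_mem by metis
  with wf c Ref have "fst v < fst w" and w: "w \<in> fst ` set ns"
    by (auto simp: wf_obdd_def child_ok_def)
  moreover have "fst w \<in> fst ` set xs"
    using wf(2) w by (auto simp: wf_asg_def)
  moreover have "sorted_wrt (<) (map fst ns)" "sorted_wrt (<) (map fst xs)"
    using wf by (auto simp: wf_obdd_def wf_asg_def)
  ultimately have "key_from ns (Suc p1) w" "key_from xs (Suc p2) (fst w)"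
    using key_from_Suc_if_greater[of ns p1 w] key_from_Suc_if_greater[of xs p2 "fst w"] node asg
    by (simp_all add: less_prod_def)
  then show ?thesis
    using Ref key_from_mono[of p2 "Suc p2"] by (simp add: child_ahead_def)
qed (simp add: child_ahead_def)

lemma asg_fun_nth:
  assumes "sorted_wrt (<) (map fst xs)" "p < length xs"
  shows "asg_fun xs (fst (xs ! p)) = snd (xs ! p)"
proof -
  have "map_of xs (fst (xs ! p)) = Some (snd (xs ! p))"
  proof (rule map_of_is_SomeI)
    show "distinct (map fst xs)"
      using assms(1) by (simp add: strict_sorted_iff)
    show "(fst (xs ! p), snd (xs ! p)) \<in> set xs"
      using assms(2) by simp
  qed
  then show ?thesis
    by (simp add: asg_fun_def)
qed

lemma obdd_val_Ref_if:
  "(v, l, h) \<in> set ns \<Longrightarrow> obdd_val ns a (if a (fst v) then h else l) b \<Longrightarrow> obdd_val ns a (Ref v) b"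
  by (cases "a (fst v)") (auto intro: obdd_val.node_hi obdd_val.node_lo)

lemma obdd_scanner_step:
  assumes wf: "wf_obdd root ns" "wf_asg xs ns"
    and ahead: "child_ahead ns xs p1 p2 (Ref v)"
  obtains
    (skip_node) "obdd_scanner [CChild (Ref v)] (Some (ns ! p1)) (Some (xs ! p2)) = (Adv1, [CChild (Ref v)])"
      "child_ahead ns xs (Suc p1) p2 (Ref v)"
  | (skip_var) "obdd_scanner [CChild (Ref v)] (Some (ns ! p1)) (Some (xs ! p2)) = (Adv2, [CChild (Ref v)])"
      "child_ahead ns xs p1 (Suc p2) (Ref v)"
  | (descend) c' where
      "obdd_scanner [CChild (Ref v)] (Some (ns ! p1)) (Some (xs ! p2)) = (Adv1, [CChild c'])"
      "child_ahead ns xs (Suc p1) p2 c'"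
      "\<And>b. obdd_val ns (asg_fun xs) c' b \<Longrightarrow> obdd_val ns (asg_fun xs) (Ref v) b"
proof -
  have sorted: "sorted_wrt (<) (map fst ns)" "sorted_wrt (<) (map fst xs)"
    using wf by (auto simp: wf_obdd_def wf_asg_def)
  have keys: "key_from ns p1 v" "key_from xs p2 (fst v)"
    using ahead by (auto simp: child_ahead_def)
  obtain u l h i val where heads: "ns ! p1 = (u, l, h)" "xs ! p2 = (i, val)"
    by (metis prod.exhaust)
  have p: "p1 < length ns" "p2 < length xs" and "u \<le> v" "i \<le> fst v"
    using key_from_head_le[OF sorted(1) keys(1)] key_from_head_le[OF sorted(2) keys(2)] heads
    by auto
  then consider "u < v" | "u = v" "i < fst v" | "u = v" "i = fst v"
    by fastforce
  then show thesis
  proof cases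
    case 1
    then show thesis
      using skip_node keys heads key_from_Suc[of ns p1 v] by (simp add: obdd_scanner_def child_ahead_def)
  next
    case 2
    then show thesis
      using skip_var keys heads key_from_Suc[of xs p2 "fst v"] by (simp add: obdd_scanner_def child_ahead_def)
  next
    case 3
    have "(v, l, h) \<in> set ns"
      using p(1) heads 3 nth_mem by metis
    moreover have "asg_fun xs (fst v) = val"
      using asg_fun_nth[OF sorted(2) p(2)] heads 3 by simp
    moreover have "child_ahead ns xs (Suc p1) p2 (if val then h else l)"
      using child_ahead_child[OF wf p(1) _ p(2)] 3 heads by simp
    ultimately show thesis
      using descend[of "if val then h else l"] obdd_val_Ref_if 3 heads by (simp add: obdd_scanner_def)
  qed
qed

lemma run_obdd_scanner:
  assumes wf: "wf_obdd root ns" "wf_asg xs ns"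
  shows "length ns - p1 + (length xs - p2) \<le> n \<Longrightarrow> child_ahead ns xs p1 p2 c \<Longrightarrow>
    \<exists>b q1 q2 t. run obdd_scanner ns xs (Suc n) [CChild c] p1 p2 = Some (b, q1, q2, t)
      \<and> obdd_val ns (asg_fun xs) c b \<and> t \<le> Suc n"
proof (induction n arbitrary: p1 p2 c)
  case 0
  then show ?case
    by (cases c) (auto simp: child_ahead_def key_from_def run_obdd_scanner_Leaf simp del: run.simps
        intro: obdd_val.leaf)
next
  case (Suc n)
  show ?case
  proof (cases c)
    case (Leaf b)
    then show ?thesis
      by (simp add: run_obdd_scanner_Leaf obdd_val.leaf del: run.simps)
  next
    case (Ref v)
    have p: "p1 < length ns" "p2 < length xs"
      using Suc.prems(2) Ref by (auto simp: child_ahead_def key_from_def)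
    then have fuel: "length ns - Suc p1 + (length xs - p2) \<le> n" "length ns - p1 + (length xs - Suc p2) \<le> n"
      using Suc.prems(1) by simp_all
    from wf Suc.prems(2)[unfolded Ref] show ?thesis
    proof (cases rule: obdd_scanner_step)
      case skip_node
      with Suc.IH[OF fuel(1)] obtain b q1 q2 t where
        run: "run obdd_scanner ns xs (Suc n) [CChild c] (Suc p1) p2 = Some (b, q1, q2, t)"
        and "obdd_val ns (asg_fun xs) c b" "t \<le> Suc n"
        using Ref by blast
      then show ?thesis
        using run_Suc_Adv1[OF p _ run] skip_node(1) Ref by (auto simp del: run.simps)
    next
      case skip_var
      with Suc.IH[OF fuel(2)] obtain b q1 q2 t where
        run: "run obdd_scanner ns xs (Suc n) [CChild c] p1 (Suc p2) = Some (b, q1, q2, t)"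
        and "obdd_val ns (asg_fun xs) c b" "t \<le> Suc n"
        using Ref by blast
      then show ?thesis
        using run_Suc_Adv2[OF p _ run] skip_var(1) Ref by (auto simp del: run.simps)
    next
      case (descend c')
      with Suc.IH[OF fuel(1)] obtain b q1 q2 t where
        run: "run obdd_scanner ns xs (Suc n) [CChild c'] (Suc p1) p2 = Some (b, q1, q2, t)"
        and "obdd_val ns (asg_fun xs) c' b" "t \<le> Suc n"
        by blast
      then show ?thesis
        using run_Suc_Adv1[OF p _ run] descend(1,3) Ref by (auto simp del: run.simps)
    qed
  qed
qed

lemma scan_ios_le_ceil_div: "scan_ios B len p \<le> ceil_div len B"
  unfolding scan_ios_def ceil_div_def by (intro div_le_mono) simp

theorem lemma10:
  "\<exists>(K::nat) (c::nat) (m::machine). step_ok K m \<and>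
     (\<forall>(B::nat) (M::nat) (root::child) (ns::node list) (xs::asg list).
        1 \<le> B \<longrightarrow> 2 * B + K \<le> M \<longrightarrow> wf_obdd root ns \<longrightarrow> wf_asg xs ns \<longrightarrow>
        (\<exists>fuel b p1 p2 t. run m ns xs fuel [CChild root] 0 0 = Some (b, p1, p2, t)
           \<and> obdd_val ns (asg_fun xs) root b
           \<and> scan_ios B (length ns) p1 + scan_ios B (length xs) p2
               \<le> ceil_div (length ns) B + ceil_div (length xs) B
           \<and> t \<le> c * (length ns + length xs + 1)))"
proof (rule exI[of _ 1], rule exI[of _ 1], rule exI[of _ obdd_scanner],
    intro conjI step_ok_obdd_scanner allI impI)
  fix B M :: nat and root ns xs
  assume wf: "wf_obdd root ns" "wf_asg xs ns"
  have "length ns - 0 + (length xs - 0) \<le> length ns + length xs"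
    by simp
  from run_obdd_scanner[OF wf this child_ahead_root[OF wf]]
  obtain b p1 p2 t where
    "run obdd_scanner ns xs (Suc (length ns + length xs)) [CChild root] 0 0 = Some (b, p1, p2, t)"
    "obdd_val ns (asg_fun xs) root b" and t: "t \<le> Suc (length ns + length xs)"
    by blast
  moreover have "t \<le> 1 * (length ns + length xs + 1)"
    using t by simp
  moreover have "scan_ios B (length ns) p1 + scan_ios B (length xs) p2
      \<le> ceil_div (length ns) B + ceil_div (length xs) B"
    by (intro add_mono scan_ios_le_ceil_div)
  ultimately show "\<exists>fuel b p1 p2 t. run obdd_scanner ns xs fuel [CChild root] 0 0 = Some (b, p1, p2, t)
      \<and> obdd_val ns (asg_fun xs) root b
      \<and> scan_ios B (length ns) p1 + scan_ios B (length xs) p2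
          \<le> ceil_div (length ns) B + ceil_div (length xs) B
      \<and> t \<le> 1 * (length ns + length xs + 1)"
    by blast
qed

end
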